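(* Let $G$ be a finite group with $|G| = mp^k$, where $p$ is a prime, $k \geq 1$, and $m$ is a natural number such that $1 < m/q < p < m$, where $q$ is the smallest prime divisor of $m$. If $P$ and $R$ are distinct Sylow $p$-subgroups of $G$, then $G = \langle P, R\rangle$ and $P \cap R = O_p(G)$ has order $p^{k-1}$.
   Context: $O_p(G)$ denotes the largest normal $p$-subgroup of $G$. *)

theory Defs
  imports "HOL-Algebra.Algebra"
begin

definition p_subgroup :: "('a, 'b) monoid_scheme \<Rightarrow> nat \<Rightarrow> 'a set \<Rightarrow> bool" where
  "p_subgroup G p H \<longleftrightarrow> subgroup H G \<and> (\<exists>n. card H = p ^ n)"

definition sylow_subgroup :: "('a, 'b) monoid_scheme \<Rightarrow> nat \<Rightarrow> 'a set \<Rightarrow> bool" where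
  "sylow_subgroup G p P \<longleftrightarrow> subgroup P G \<and> card P = p ^ multiplicity p (order G)"

text \<open>O_p(G), the largest normal p-subgroup: in a finite group it is the union
  of all normal p-subgroups (the product of normal p-subgroups is again one).\<close>
definition O_p :: "('a, 'b) monoid_scheme \<Rightarrow> nat \<Rightarrow> 'a set" where
  "O_p G p = \<Union> {N. N \<lhd> G \<and> p_subgroup G p N}"

end

theory Submission
  imports Defs
begin

(* As m < pq for the least prime factor q of m, every divisor of m
   that is at least p equals m; in particular p does not divide m, and m < p^2.
   For distinct Sylow p-subgroups P and R the product formula |PR| |P \<inter> R| = |P| |R|
   together with |PR| \<le> |G| < p^(k+2) forces |P \<inter> R| = p^(k-1). The order of <P, R>
   is p^k times a divisor of m, and that divisor is at least p because |PR| \<ge> p^(k+1);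
   so <P, R> = G. Being of index p, P \<inter> R is normalized by P and by R, hence by
   <P, R> = G. Finally a normal p-subgroup lies in every Sylow p-subgroup, so
   P \<inter> R = O_p(G). *)

lemma least_prime_divisor_le_divisor:
  fixes m e q :: nat
  assumes "\<forall>r. Factorial_Ring.prime r \<and> r dvd m \<longrightarrow> q \<le> r" and "e dvd m" and "1 < e"
  shows "q \<le> e"
proof -
  obtain r where "Factorial_Ring.prime r" and "r dvd e"
    using prime_factor_nat[of e] \<open>1 < e\<close> by auto
  then have "q \<le> r"
    using assms(1,2) dvd_trans by blast
  also have "r \<le> e"
    using \<open>r dvd e\<close> \<open>1 < e\<close> by (simp add: dvd_imp_le)
  finally show ?thesis .
qed

lemma divisor_ge_eq_self:
  fixes m p q d :: nat
  assumes "\<forall>r. Factorial_Ring.prime r \<and> r dvd m \<longrightarrow> q \<le> r" and "0 < m" and "m < p * q"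
    and "d dvd m" and "p \<le> d"
  shows "d = m"
proof (rule ccontr)
  assume "d \<noteq> m"
  obtain e where m: "m = d * e"
    using \<open>d dvd m\<close> by blast
  with \<open>d \<noteq> m\<close> \<open>0 < m\<close> have "1 < e"
    by (cases e) auto
  then have "q \<le> e"
    using least_prime_divisor_le_divisor assms(1) m by simp
  then have "p * q \<le> d * e"
    using \<open>p \<le> d\<close> by (simp add: mult_le_mono)
  with m \<open>m < p * q\<close> show False
    by simp
qed

lemma less_square_if_less_mult_least_prime_divisor:
  fixes m p q :: nat
  assumes "\<forall>r. Factorial_Ring.prime r \<and> r dvd m \<longrightarrow> q \<le> r" and "m < p * q"
    and "q dvd m" and "q < m"
  shows "m < p\<^sup>2"
proof -
  obtain t where m: "m = q * t"
    using \<open>q dvd m\<close> by blast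
  with \<open>q < m\<close> have "1 < t"
    by (cases t) auto
  then have "q \<le> t"
    using least_prime_divisor_le_divisor assms(1) m by simp
  then have "q * q < p * q"
    using m \<open>m < p * q\<close> by (meson le_less_trans mult_le_mono2)
  then have "q < p"
    by simp
  with \<open>m < p * q\<close> show ?thesis
    by (simp add: power2_eq_square) (meson less_le_trans mult_le_mono2 less_imp_le)
qed

lemma Int_psubset_if_card_eq:
  assumes "finite B" and "card A = card B" and "A \<noteq> B"
  shows "A \<inter> B \<subset> A"
  using card_subset_eq[OF assms(1) _ assms(2)] assms(3) by blast

context group
begin

lemma inv_mult_cancel_left:
  "x \<in> carrier G \<Longrightarrow> y \<in> carrier G \<Longrightarrow> inv x \<otimes> (x \<otimes> y) = y"
  by (simp add: m_assoc [symmetric])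

lemma mult_inv_cancel_left:
  "x \<in> carrier G \<Longrightarrow> y \<in> carrier G \<Longrightarrow> x \<otimes> (inv x \<otimes> y) = y"
  by (simp add: m_assoc [symmetric])

lemma finite_subgroup: "finite (carrier G) \<Longrightarrow> subgroup H G \<Longrightarrow> finite H"
  using finite_subset subgroup.subset by blast

lemma card_subgroup_dvd:
  assumes "subgroup H G" and "subgroup K G" and "H \<subseteq> K"
  shows "card H dvd card K"
proof -
  interpret K: group "G\<lparr>carrier := K\<rparr>"
    using assms(2) by (rule subgroup_imp_group)
  have "subgroup H (G\<lparr>carrier := K\<rparr>)"
    using assms by (rule subgroup_incl)
  from K.lagrange[OF this] have "card (rcosets\<^bsub>G\<lparr>carrier := K\<rparr>\<^esub> H) * card H = card K"
    by (simp add: order_def)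
  then show ?thesis
    by (metis dvd_triv_right)
qed

lemma card_subgroup_prime_power:
  assumes "Factorial_Ring.prime p" and "subgroup H G" and "subgroup K G" and "H \<subseteq> K"
    and "card K = p ^ n"
  obtains j where "j \<le> n" and "card H = p ^ j"
  using card_subgroup_dvd[OF assms(2-4)] assms(5) divides_primepow_nat[OF assms(1)] by auto

lemma card_proper_subgroup_le:
  assumes "Factorial_Ring.prime p" and "subgroup H G" and "subgroup K G" and "H \<subset> K"
    and "finite K" and "card K = p ^ n"
  shows "p * card H \<le> card K"
proof -
  obtain j where "j \<le> n" and card_H: "card H = p ^ j"
    using card_subgroup_prime_power assms(1-3,6) \<open>H \<subset> K\<close> by blast
  have "card H < card K"
    using \<open>finite K\<close> \<open>H \<subset> K\<close> by (rule psubset_card_mono)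
  then have "j < n"
    using card_H \<open>card K = p ^ n\<close> \<open>j \<le> n\<close> by (cases "j = n") auto
  then show ?thesis
    using card_H \<open>card K = p ^ n\<close> prime_gt_1_nat[OF assms(1)]
    by (metis Suc_leI less_imp_le_nat power_Suc power_increasing)
qed

lemma card_mult_fibre:
  assumes H: "subgroup H G" and K: "subgroup K G" and "h\<^sub>0 \<in> H" and "k\<^sub>0 \<in> K"
  shows "card {(h, k) \<in> H \<times> K. h \<otimes> k = h\<^sub>0 \<otimes> k\<^sub>0} = card (H \<inter> K)"
proof -
  note carrier = subgroup.mem_carrier[OF H] subgroup.mem_carrier[OF K]
  note cancel = inv_mult_cancel_left mult_inv_cancel_left
  have fibre_elem: "inv h\<^sub>0 \<otimes> h = k\<^sub>0 \<otimes> inv k" "inv (inv h\<^sub>0 \<otimes> h) \<otimes> k\<^sub>0 = k"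
    if "h \<in> H" "k \<in> K" "h \<otimes> k = h\<^sub>0 \<otimes> k\<^sub>0" for h k
  proof -
    have "inv h\<^sub>0 \<otimes> h = inv h\<^sub>0 \<otimes> (h \<otimes> k) \<otimes> inv k"
      using that(1,2) assms carrier by (simp add: m_assoc)
    also have "\<dots> = k\<^sub>0 \<otimes> inv k"
      using that assms carrier by (simp add: m_assoc [symmetric])
    finally show "inv h\<^sub>0 \<otimes> h = k\<^sub>0 \<otimes> inv k" .
    then show "inv (inv h\<^sub>0 \<otimes> h) \<otimes> k\<^sub>0 = k"
      using that assms carrier by (simp add: inv_mult_group m_assoc)
  qed
  have "bij_betw (\<lambda>d. (h\<^sub>0 \<otimes> d, inv d \<otimes> k\<^sub>0)) (H \<inter> K)
          {(h, k) \<in> H \<times> K. h \<otimes> k = h\<^sub>0 \<otimes> k\<^sub>0}"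
  proof (rule bij_betw_byWitness[where f' = "\<lambda>(h, k). inv h\<^sub>0 \<otimes> h"])
    show "\<forall>d \<in> H \<inter> K. (\<lambda>(h, k). inv h\<^sub>0 \<otimes> h) (h\<^sub>0 \<otimes> d, inv d \<otimes> k\<^sub>0) = d"
      using assms carrier by (auto simp: cancel)
    show "(\<lambda>d. (h\<^sub>0 \<otimes> d, inv d \<otimes> k\<^sub>0)) ` (H \<inter> K) \<subseteq> {(h, k) \<in> H \<times> K. h \<otimes> k = h\<^sub>0 \<otimes> k\<^sub>0}"
      using assms carrier by (auto simp: m_assoc cancel subgroup.m_closed subgroup.m_inv_closed)
    show "\<forall>a \<in> {(h, k) \<in> H \<times> K. h \<otimes> k = h\<^sub>0 \<otimes> k\<^sub>0}.
            (\<lambda>d. (h\<^sub>0 \<otimes> d, inv d \<otimes> k\<^sub>0)) ((\<lambda>(h, k). inv h\<^sub>0 \<otimes> h) a) = a"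
      using assms carrier fibre_elem by (auto simp: cancel)
    show "(\<lambda>(h, k). inv h\<^sub>0 \<otimes> h) ` {(h, k) \<in> H \<times> K. h \<otimes> k = h\<^sub>0 \<otimes> k\<^sub>0} \<subseteq> H \<inter> K"
    proof clarify
      fix h k assume hk: "h \<in> H" "k \<in> K" "h \<otimes> k = h\<^sub>0 \<otimes> k\<^sub>0"
      then have "inv h\<^sub>0 \<otimes> h \<in> H" and "k\<^sub>0 \<otimes> inv k \<in> K"
        using assms by (simp_all add: subgroup.m_closed subgroup.m_inv_closed)
      with fibre_elem(1)[OF hk] show "inv h\<^sub>0 \<otimes> h \<in> H \<inter> K"
        by simp
    qed
  qed
  then show ?thesis
    by (rule bij_betw_same_card [symmetric])
qed

lemma card_set_mult_mult_card_Int: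
  assumes "finite (carrier G)" and H: "subgroup H G" and K: "subgroup K G"
  shows "card (H <#> K) * card (H \<inter> K) = card H * card K"
proof -
  let ?mult = "\<lambda>(h, k). h \<otimes> k"
  have fin: "finite (H \<times> K)"
    using finite_subgroup[OF assms(1)] H K by simp
  have image: "?mult ` (H \<times> K) = H <#> K"
    unfolding set_mult_def by force
  have "card (H \<times> K) = (\<Sum>z \<in> H <#> K. card {a \<in> H \<times> K. ?mult a = z})"
    using sum.image_gen[OF fin, of "\<lambda>_. 1" ?mult] unfolding image by (simp only: card_eq_sum)
  also have "\<dots> = (\<Sum>z \<in> H <#> K. card (H \<inter> K))"
  proof (rule sum.cong [OF refl])
    fix z assume "z \<in> H <#> K"
    then obtain h\<^sub>0 k\<^sub>0 where "h\<^sub>0 \<in> H" "k\<^sub>0 \<in> K" "z = h\<^sub>0 \<otimes> k\<^sub>0"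
      unfolding set_mult_def by blast
    moreover have "{a \<in> H \<times> K. ?mult a = z} = {(h, k) \<in> H \<times> K. h \<otimes> k = z}"
      by auto
    ultimately show "card {a \<in> H \<times> K. ?mult a = z} = card (H \<inter> K)"
      using card_mult_fibre[OF H K] by simp
  qed
  finally show ?thesis
    by (simp add: card_cartesian_product)
qed

lemma card_set_mult_ge_if_Int_psubset:
  assumes "finite (carrier G)" and "Factorial_Ring.prime p"
    and H: "subgroup H G" and K: "subgroup K G" and "card H = p ^ n" and "H \<inter> K \<subset> H"
  shows "p * card K \<le> card (H <#> K)"
proof -
  have HK: "subgroup (H \<inter> K) G"
    using H K by (rule subgroups_Inter_pair)
  have "p * card (H \<inter> K) \<le> card H"
    using card_proper_subgroup_le[OF assms(2) HK H assms(6) finite_subgroup[OF assms(1) H] assms(5)] .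
  then have "p * card K * card (H \<inter> K) \<le> card H * card K"
    using mult_le_mono1[of _ _ "card K"] by (simp add: ac_simps)
  also have "\<dots> = card (H <#> K) * card (H \<inter> K)"
    using card_set_mult_mult_card_Int[OF assms(1) H K] by simp
  finally show ?thesis
    using subgroup.finite_imp_card_positive[OF HK assms(1)] by simp
qed

lemma conj_set_eq_image: "x <# D #> inv x = (\<lambda>h. x \<otimes> h \<otimes> inv x) ` D"
  unfolding l_coset_def r_coset_def by auto

lemma card_r_coset:
  assumes "M \<subseteq> carrier G" and "x \<in> carrier G"
  shows "card (M #> x) = card M"
proof -
  have "M #> x = (\<lambda>y. y \<otimes> x) ` M"
    unfolding r_coset_def by auto
  then show ?thesis
    using inj_on_g[OF assms] by (simp add: card_image)
qed

lemma set_mult_conj_r_coset: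
  assumes "M \<subseteq> carrier G" and "D \<subseteq> carrier G" and "x \<in> carrier G"
  shows "(M <#> (x <# D #> inv x)) #> x = M <#> (x <# D)"
proof -
  have "(x <# D #> inv x) #> x = x <# D"
    using assms(2,3) by (simp add: coset_mult_assoc l_coset_subset_G)
  then show ?thesis
    using assms by (simp add: setmult_rcos_assoc [symmetric] l_coset_subset_G r_coset_subset_G)
qed

lemma double_coset_subset_Diff:
  assumes D: "subgroup D G" and P: "subgroup P G" and "D \<subseteq> P" and "x \<in> P" and "x \<notin> D"
  shows "D <#> (x <# D) \<subseteq> P - D"
proof
  fix y assume "y \<in> D <#> (x <# D)"
  then obtain d e where "d \<in> D" "e \<in> D" and y: "y = d \<otimes> (x \<otimes> e)"
    unfolding set_mult_def l_coset_def by blast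
  have "y \<in> P"
    using y \<open>d \<in> D\<close> \<open>e \<in> D\<close> \<open>x \<in> P\<close> \<open>D \<subseteq> P\<close> P by (auto intro: subgroup.m_closed)
  moreover have "y \<notin> D"
  proof
    assume "y \<in> D"
    have "x = inv d \<otimes> y \<otimes> inv e"
      using y subgroup.mem_carrier[OF P \<open>x \<in> P\<close>] \<open>d \<in> D\<close> \<open>e \<in> D\<close> subgroup.mem_carrier[OF D]
      by (simp add: m_assoc inv_mult_cancel_left)
    also have "\<dots> \<in> D"
      using \<open>y \<in> D\<close> \<open>d \<in> D\<close> \<open>e \<in> D\<close> D by (simp add: subgroup.m_closed subgroup.m_inv_closed)
    finally show False
      using \<open>x \<notin> D\<close> by contradiction
  qed
  ultimately show "y \<in> P - D"
    by simp
qed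

text \<open>If the conjugate \<open>E = x D x\<inverse>\<close> differed from \<open>D\<close>, then \<open>|DE| \<ge> p |D| = |P|\<close>;
  but right translation by \<open>x\<close> maps \<open>DE\<close> onto the double coset \<open>DxD\<close>, which lies in \<open>P - D\<close>.\<close>

lemma conj_eq_if_prime_index:
  assumes "finite (carrier G)" and "Factorial_Ring.prime p"
    and D: "subgroup D G" and P: "subgroup P G" and "D \<subseteq> P"
    and card_D: "card D = p ^ n" and card_P: "card P = p * card D" and "x \<in> P"
  shows "x <# D #> inv x = D"
proof (rule ccontr)
  let ?E = "x <# D #> inv x"
  assume "?E \<noteq> D"
  have x: "x \<in> carrier G"
    using P \<open>x \<in> P\<close> by (rule subgroup.mem_carrier)
  have E: "subgroup ?E G"
    using x D by (rule subgroup_conjugation_is_surj2)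
  have card_E: "card ?E = card D"
    unfolding conj_set_eq_image
    by (rule card_image, rule inj_onI) (use x subgroup.mem_carrier[OF D] conjugation_is_inj in blast)
  have "x \<notin> D"
  proof
    assume "x \<in> D"
    then have "x <# D = D" and "D #> inv x = D"
      using x D by (simp_all add: coset_join2 coset_join3 subgroup.m_inv_closed)
    with \<open>?E \<noteq> D\<close> show False
      by simp
  qed
  have "D \<inter> ?E \<subset> D"
    using Int_psubset_if_card_eq[OF finite_subgroup[OF assms(1) E] card_E [symmetric]] \<open>?E \<noteq> D\<close>
    by blast
  then have "p * card D \<le> card (D <#> ?E)"
    using card_set_mult_ge_if_Int_psubset[OF assms(1,2) D E card_D] card_E by simp
  also have "\<dots> = card ((D <#> ?E) #> x)"
    using card_r_coset[OF setmult_subset_G x] subgroup.subset[OF D] subgroup.subset[OF E] by simp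
  also have "\<dots> = card (D <#> (x <# D))"
    using set_mult_conj_r_coset[OF _ _ x] subgroup.subset[OF D] by simp
  also have "\<dots> \<le> card (P - D)"
    using double_coset_subset_Diff[OF D P \<open>D \<subseteq> P\<close> \<open>x \<in> P\<close> \<open>x \<notin> D\<close>] finite_subgroup[OF assms(1) P]
    by (simp add: card_mono)
  also have "\<dots> < p * card D"
    using card_Diff_subset[OF finite_subgroup[OF assms(1) D] \<open>D \<subseteq> P\<close>] card_P card_D
      prime_gt_0_nat[OF assms(2)]
    by simp
  finally show False
    by simp
qed

lemma normal_if_generators_normalize:
  assumes D: "subgroup D G" and "A \<subseteq> carrier G" and "generate G A = carrier G"
    and conj: "\<And>x. x \<in> A \<Longrightarrow> x <# D #> inv x = D"
  shows "D \<lhd> G"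
proof -
  have D_carrier: "D \<subseteq> carrier G"
    using D by (rule subgroup.subset)
  have "A \<subseteq> normalizer G D"
    using \<open>A \<subseteq> carrier G\<close> conj D_carrier unfolding normalizer_def stabilizer_def by auto
  then have "carrier G \<subseteq> normalizer G D"
    using generate_subgroup_incl[OF _ normalizer_imp_subgroup[OF D_carrier]] \<open>generate G A = carrier G\<close>
    by metis
  then have "x <# D #> inv x = D" if "x \<in> carrier G" for x
    using that D_carrier unfolding normalizer_def stabilizer_def by auto
  then show ?thesis
    unfolding normal_inv_iff conj_set_eq_image using D by blast
qed

lemma normal_Int_if_prime_index:
  assumes "finite (carrier G)" and "Factorial_Ring.prime p"
    and P: "subgroup P G" and R: "subgroup R G" and "generate G (P \<union> R) = carrier G"
    and "card (P \<inter> R) = p ^ n"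
    and "card P = p * card (P \<inter> R)" and "card R = p * card (P \<inter> R)"
  shows "P \<inter> R \<lhd> G"
proof (rule normal_if_generators_normalize)
  show PR: "subgroup (P \<inter> R) G"
    using P R by (rule subgroups_Inter_pair)
  show "P \<union> R \<subseteq> carrier G"
    using P R by (auto dest: subgroup.subset)
  show "x <# (P \<inter> R) #> inv x = P \<inter> R" if "x \<in> P \<union> R" for x
    using that conj_eq_if_prime_index[OF assms(1,2) PR] P R assms(6-8) by blast
qed (fact assms(5))

lemma normal_prime_power_subset_sylow:
  assumes "finite (carrier G)" and "Factorial_Ring.prime p"
    and "order G = m * p ^ k" and "\<not> p dvd m"
    and N: "N \<lhd> G" and card_N: "card N = p ^ a"
    and S: "subgroup S G" and card_S: "card S = p ^ k"
  shows "N \<subseteq> S"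
proof -
  have N_sub: "subgroup N G"
    using N by (rule normal_imp_subgroup)
  have NS: "subgroup (N <#> S) G"
    using N S by (rule mult_norm_subgroup)
  obtain b where "b \<le> a" and card_Int: "card (N \<inter> S) = p ^ b"
    using card_subgroup_prime_power[OF assms(2) subgroups_Inter_pair[OF N_sub S] N_sub] card_N
    by blast
  have "card (N <#> S) * p ^ b = p ^ (a - b) * p ^ k * p ^ b"
    using card_set_mult_mult_card_Int[OF assms(1) N_sub S] card_N card_S card_Int \<open>b \<le> a\<close>
    by (simp add: ac_simps flip: power_add)
  then have "card (N <#> S) = p ^ (a - b) * p ^ k"
    using prime_gt_0_nat[OF assms(2)] by simp
  moreover have "card (N <#> S) dvd m * p ^ k"
    using card_subgroup_dvd[OF NS subgroup_self subgroup.subset[OF NS]] assms(3)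
    by (simp add: order_def)
  ultimately have "p ^ (a - b) dvd m"
    using prime_gt_0_nat[OF assms(2)] by simp
  then have "a = b"
    using \<open>b \<le> a\<close> \<open>\<not> p dvd m\<close> by (metis diff_is_0_eq dvd_power dvd_trans gr0I le_antisym)
  then have "N \<inter> S = N"
    using card_subset_eq[OF finite_subgroup[OF assms(1) N_sub] Int_lower1] card_Int card_N by simp
  then show ?thesis
    by blast
qed

lemma O_p_subset_sylow:
  assumes "finite (carrier G)" and "Factorial_Ring.prime p"
    and "order G = m * p ^ k" and "\<not> p dvd m"
    and "subgroup S G" and "card S = p ^ k"
  shows "O_p G p \<subseteq> S"
  using normal_prime_power_subset_sylow[OF assms(1-4) _ _ assms(5,6)]
  unfolding O_p_def p_subgroup_def by blast

lemma card_Int_distinct_sylows: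
  assumes "finite (carrier G)" and "Factorial_Ring.prime p"
    and "order G = m * p ^ k" and "m < p\<^sup>2"
    and P: "subgroup P G" and R: "subgroup R G"
    and card_P: "card P = p ^ k" and card_R: "card R = p ^ k" and "P \<noteq> R"
  shows "card (P \<inter> R) = p ^ (k - 1)"
proof -
  have p: "1 < p"
    using assms(2) by (rule prime_gt_1_nat)
  have PR: "subgroup (P \<inter> R) G"
    using P R by (rule subgroups_Inter_pair)
  obtain j where card_Int: "card (P \<inter> R) = p ^ j"
    using card_subgroup_prime_power[OF assms(2) PR P] card_P by blast
  have "P \<inter> R \<subset> P"
    using Int_psubset_if_card_eq[OF finite_subgroup[OF assms(1) R] card_P [folded card_R] \<open>P \<noteq> R\<close>] .
  then have "p ^ Suc j \<le> p ^ k"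
    using card_proper_subgroup_le[OF assms(2) PR P _ finite_subgroup[OF assms(1) P] card_P]
      card_Int card_P
    by simp
  then have "Suc j \<le> k"
    using power_le_imp_le_exp[OF p] by blast
  have "card (P <#> R) \<le> order G"
    unfolding order_def
    using card_mono[OF assms(1) setmult_subset_G[OF subgroup.subset[OF P] subgroup.subset[OF R]]] .
  also have "\<dots> < p ^ (k + 2)"
    using assms(3,4) p by (simp add: power_add power2_eq_square)
  finally have small_product: "card (P <#> R) < p ^ (k + 2)" .
  have "p ^ (k + k) = card (P <#> R) * p ^ j"
    using card_set_mult_mult_card_Int[OF assms(1) P R] card_P card_R card_Int
    by (simp add: power_add)
  also have "\<dots> < p ^ (k + 2) * p ^ j"
    using small_product p by simp
  finally have "p ^ (k + k) < p ^ (k + 2 + j)"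
    by (simp only: power_add)
  then have "k + k < k + 2 + j"
    by (rule power_less_imp_less_exp[OF p])
  with \<open>Suc j \<le> k\<close> have "j = k - 1"
    by linarith
  then show ?thesis
    using card_Int by simp
qed

lemma generate_Un_distinct_sylows_eq_carrier:
  assumes "finite (carrier G)" and "Factorial_Ring.prime p"
    and "order G = m * p ^ k" and "\<forall>d. d dvd m \<and> p \<le> d \<longrightarrow> d = m"
    and P: "subgroup P G" and R: "subgroup R G"
    and card_P: "card P = p ^ k" and card_R: "card R = p ^ k" and "P \<noteq> R"
  shows "generate G (P \<union> R) = carrier G"
proof -
  let ?H = "generate G (P \<union> R)"
  have H: "subgroup ?H G"
    using P R by (simp add: generate_is_subgroup subgroup.subset)
  have H_carrier: "?H \<subseteq> carrier G"
    using H by (rule subgroup.subset)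
  have "P \<subseteq> ?H" and "R \<subseteq> ?H"
    by (auto intro: generate.incl)
  then have "P <#> R \<subseteq> ?H"
    using mono_set_mult[of P ?H R ?H G] subgroup_mult_id[OF H] by simp
  obtain d where card_H: "card ?H = p ^ k * d"
    using card_subgroup_dvd[OF P H \<open>P \<subseteq> ?H\<close>] card_P by (auto elim: dvdE)
  have "p ^ k * d dvd p ^ k * m"
    using card_subgroup_dvd[OF H subgroup_self H_carrier] card_H assms(3)
    by (simp add: order_def mult.commute)
  then have "d dvd m"
    using prime_gt_0_nat[OF assms(2)] by simp
  have "P \<inter> R \<subset> P"
    using Int_psubset_if_card_eq[OF finite_subgroup[OF assms(1) R] card_P [folded card_R] \<open>P \<noteq> R\<close>] .
  then have "p * p ^ k \<le> card (P <#> R)"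
    using card_set_mult_ge_if_Int_psubset[OF assms(1,2) P R card_P] card_R by simp
  also have "\<dots> \<le> p ^ k * d"
    using card_mono[OF finite_subgroup[OF assms(1) H] \<open>P <#> R \<subseteq> ?H\<close>] card_H by simp
  finally have "p \<le> d"
    using prime_gt_0_nat[OF assms(2)] by (simp add: mult.commute)
  with \<open>d dvd m\<close> have "card ?H = order G"
    using assms(3,4) card_H by (simp add: mult.commute)
  then show ?thesis
    using card_subset_eq[OF assms(1) H_carrier] by (simp add: order_def)
qed

end

theorem lemma3:
  fixes G (structure) and p k m q :: nat and P R :: "'a set"
  assumes "group G" and "finite (carrier G)"
    and "Factorial_Ring.prime p" and "k \<ge> 1"
    and "order G = m * p ^ k"
    and "Factorial_Ring.prime q" and "q dvd m" and "\<forall>r. Factorial_Ring.prime r \<and> r dvd m \<longrightarrow> q \<le> r"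
    and "1 < real m / real q" and "real m / real q < real p" and "p < m"
    and "sylow_subgroup G p P" and "sylow_subgroup G p R" and "P \<noteq> R"
  shows "generate G (P \<union> R) = carrier G \<and> P \<inter> R = O_p G p \<and> card (P \<inter> R) = p ^ (k - 1)"
proof -
  interpret group G by fact
  have "0 < q"
    using assms(6) by (rule prime_gt_0_nat)
  then have "q < m" and "m < p * q"
    using assms(9,10) by (simp_all add: less_divide_eq divide_less_eq flip: of_nat_mult)
  then have large_divisor: "\<forall>d. d dvd m \<and> p \<le> d \<longrightarrow> d = m"
    using divisor_ge_eq_self[OF assms(8)] by auto
  then have "\<not> p dvd m"
    using \<open>p < m\<close> by auto
  have "m < p\<^sup>2"
    using less_square_if_less_mult_least_prime_divisor assms(7,8) \<open>q < m\<close> \<open>m < p * q\<close> by blast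
  have "multiplicity p (order G) = k"
    using assms(3,5) \<open>\<not> p dvd m\<close> by (simp add: multiplicity_prime_elem_times_other)
  then have P: "subgroup P G" "card P = p ^ k" and R: "subgroup R G" "card R = p ^ k"
    using assms(12,13) unfolding sylow_subgroup_def by auto
  have card_Int: "card (P \<inter> R) = p ^ (k - 1)"
    using card_Int_distinct_sylows assms(2,3,5,14) \<open>m < p\<^sup>2\<close> P R by blast
  have generate: "generate G (P \<union> R) = carrier G"
    using generate_Un_distinct_sylows_eq_carrier assms(2,3,5,14) large_divisor P R by blast
  have "P \<inter> R \<lhd> G"
    using normal_Int_if_prime_index[OF assms(2,3) P(1) R(1) generate card_Int] P(2) R(2) card_Int
      \<open>k \<ge> 1\<close>
    by (simp add: power_eq_if)
  then have "P \<inter> R \<subseteq> O_p G p"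
    unfolding O_p_def p_subgroup_def using card_Int normal_imp_subgroup by blast
  moreover have "O_p G p \<subseteq> P \<inter> R"
    using O_p_subset_sylow[OF assms(2,3,5) \<open>\<not> p dvd m\<close>] P R by blast
  ultimately show ?thesis
    using generate card_Int by blast
qed

end
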